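(* Let $\Gamma$ be the operator defined below. If $\Gamma=\sum_iA_i\otimes B_i\otimes C_i$ (finite sum) with nonzero positive semidefinite operators $A_i$ on $\mathcal H_1\otimes\mathcal H_2$, $B_i$ on $\mathcal H_3\otimes\mathcal H_4$, $C_i$ on $\mathcal H_5\otimes\mathcal H_6$, then for every $i$ there are $\alpha,\beta,\gamma>0$ and a triple $(a,b,c)\in T$ with $(A_i,B_i,C_i)=(\alpha[\mathbf a],\beta[\mathbf b],\gamma[\mathbf c])$, where $T=\{(0,0,0),(1,2,0),(2,3,0),(3,1,0),(0,3,1),(1,1,1),(2,0,1),(3,2,1),(0,1,2),(1,3,2),(2,2,2),(3,0,2),(0,2,3),(1,0,3),(2,1,3),(3,3,3)\}$.
   Context: $\mathcal H_1,\mathcal H_3,\mathcal H_5\cong\mathbb C^2$ and $\mathcal H_2,\mathcal H_4,\mathcal H_6\cong\mathbb C^2\otimes\mathbb C^2$. On each pair ($\mathcal H_1\otimes\mathcal H_2$, $\mathcal H_3\otimes\mathcal H_4$, $\mathcal H_5\otimes\mathcal H_6$) define $|\mathbf 0\rangle=|0\rangle|00\rangle$, $|\mathbf 1\rangle=|1\rangle|01\rangle$, $|\mathbf 2\rangle=|+\rangle|10\rangle$, $|\mathbf 3\rangle=|-\rangle|11\rangle$, where $|\pm\rangle=(|0\rangle\pm|1\rangle)/\sqrt2$, and $[\mathbf x]:=|\mathbf x\rangle\langle\mathbf x|$. Let $\Gamma=\frac12\sum_{(a,b,c)\in T}[\mathbf a]\otimes[\mathbf b]\otimes[\mathbf c]$,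 the three factors acting on $\mathcal H_1\otimes\mathcal H_2$, $\mathcal H_3\otimes\mathcal H_4$, $\mathcal H_5\otimes\mathcal H_6$ respectively. *)

theory Defs
  imports Complex_Main "HOL-Library.Complex_Order"
begin

text \<open>Computational basis index of H_1 (a qubit, False = 0, True = 1) tensored with
  H_2 = C^2 (x) C^2 (two qubits).  An operator on H_1 (x) H_2 is a matrix indexed by idx.\<close>
type_synonym idx = "bool \<times> bool \<times> bool"
type_synonym op = "idx \<Rightarrow> idx \<Rightarrow> complex"

text \<open>First factor of the product basis vectors: |0>, |1>, |+>, |->.\<close>
definition qfac :: "nat \<Rightarrow> bool \<Rightarrow> complex" where
  "qfac x q = (if x = 0 then (if q then 0 else 1)
              else if x = 1 then (if q then 1 else 0)
              else if x = 2 then 1 / complex_of_real (sqrt 2)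
              else (if q then -1 else 1) / complex_of_real (sqrt 2))"

definition rfac :: "nat \<Rightarrow> bool \<times> bool" where
  "rfac x = (if x = 0 then (False, False) else if x = 1 then (False, True)
             else if x = 2 then (True, False) else (True, True))"

text \<open>The vector |bold x> on H_1 (x) H_2, for x in {0,1,2,3}.\<close>
definition bket :: "nat \<Rightarrow> idx \<Rightarrow> complex" where
  "bket x = (\<lambda>(q, r). qfac x q * (if r = rfac x then 1 else 0))"

definition bproj :: "nat \<Rightarrow> op" where
  "bproj x i j = bket x i * cnj (bket x j)"

definition tensor3 :: "op \<Rightarrow> op \<Rightarrow> op \<Rightarrow> (idx \<times> idx \<times> idx) \<Rightarrow> (idx \<times> idx \<times> idx) \<Rightarrow> complex" where
  "tensor3 A B C = (\<lambda>(i, j, k) (i', j', k'). A i i' * B j j' * C k k')"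

definition psd :: "op \<Rightarrow> bool" where
  "psd A \<longleftrightarrow> (\<forall>v :: idx \<Rightarrow> complex. 0 \<le> (\<Sum>i\<in>UNIV. \<Sum>j\<in>UNIV. cnj (v i) * A i j * v j))"

definition Tset :: "(nat \<times> nat \<times> nat) set" where
  "Tset = {(0,0,0),(1,2,0),(2,3,0),(3,1,0),(0,3,1),(1,1,1),(2,0,1),(3,2,1),
           (0,1,2),(1,3,2),(2,2,2),(3,0,2),(0,2,3),(1,0,3),(2,1,3),(3,3,3)}"

definition Gamma :: "(idx \<times> idx \<times> idx) \<Rightarrow> (idx \<times> idx \<times> idx) \<Rightarrow> complex" where
  "Gamma = (\<lambda>I J. (1/2) * (\<Sum>(a, b, c)\<in>Tset. tensor3 (bproj a) (bproj b) (bproj c) I J))"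

end

theory Submission imports Defs begin

text \<open>Evaluate the sesquilinear form of \<Gamma> and of \<open>\<Sum>i. A i \<otimes> B i \<otimes> C i\<close> on a product vector
  \<open>x \<otimes> y \<otimes> z\<close>, where \<open>x, y, z\<close> run through the orthonormal basis formed by the vectors \<open>|\<^bold>a\<rangle>\<close>
  together with their orthogonal complements \<open>|\<^bold>a\<rangle>\<^sup>\<bottom>\<close> inside \<open>\<complex>\<^sup>2 \<otimes> |rfac a\<rangle>\<close>.
  On the \<Gamma> side the value is \<open>1/2\<close> if the three basis vectors are \<open>|\<^bold>a\<rangle>, |\<^bold>b\<rangle>, |\<^bold>c\<rangle>\<close> with
  \<open>(a, b, c) \<in> T\<close> and \<open>0\<close> otherwise; on the other side it is a sum of nonnegative terms.
  Hence the diagonal supports of \<open>A i, B i, C i\<close> form a product set inside this image of \<open>T\<close>,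
  and since any two coordinates of a triple in \<open>T\<close> determine the third, each support is a
  single \<open>|\<^bold>a\<rangle>\<close>.  A positive semidefinite operator whose diagonal in an orthonormal basis is
  supported on one basis vector is a multiple of its projector, because a vector with
  \<open>\<langle>u, M u\<rangle> = 0\<close> lies in the kernel of \<open>M\<close>.\<close>

definition qform :: "('a::finite \<Rightarrow> 'a \<Rightarrow> complex) \<Rightarrow> ('a \<Rightarrow> complex) \<Rightarrow> ('a \<Rightarrow> complex) \<Rightarrow> complex" where
  "qform M u w = (\<Sum>i\<in>UNIV. \<Sum>j\<in>UNIV. cnj (u i) * M i j * w j)"

definition cinner :: "('a::finite \<Rightarrow> complex) \<Rightarrow> ('a \<Rightarrow> complex) \<Rightarrow> complex" where
  "cinner u w = (\<Sum>i\<in>UNIV. cnj (u i) * w i)"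

definition unit_vec :: "'a \<Rightarrow> 'a \<Rightarrow> complex" where
  "unit_vec x = (\<lambda>j. if j = x then 1 else 0)"

lemma psd_iff_qform: "psd A \<longleftrightarrow> (\<forall>v. 0 \<le> qform A v v)"
  unfolding psd_def qform_def ..

lemma qform_sum_op: "qform (\<lambda>X Y. \<Sum>k\<in>K. f k X Y) u w = (\<Sum>k\<in>K. qform (f k) u w)"
proof -
  have "qform (\<lambda>X Y. \<Sum>k\<in>K. f k X Y) u w = (\<Sum>i\<in>UNIV. \<Sum>j\<in>UNIV. \<Sum>k\<in>K. cnj (u i) * f k i j * w j)"
    unfolding qform_def by (simp add: sum_distrib_left sum_distrib_right)
  also have "\<dots> = (\<Sum>k\<in>K. \<Sum>i\<in>UNIV. \<Sum>j\<in>UNIV. cnj (u i) * f k i j * w j)"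
    by (simp only: sum.swap[of _ UNIV K])
  finally show ?thesis by (simp add: qform_def)
qed

lemma qform_scale_op: "qform (\<lambda>X Y. c * M X Y) u w = c * qform M u w"
  unfolding qform_def by (simp add: sum_distrib_left mult_ac)

lemma qform_diff_op: "qform (\<lambda>X Y. M X Y - P X Y) u w = qform M u w - qform P u w"
  unfolding qform_def by (simp add: algebra_simps sum_subtractf)

lemma qform_lincomb_left:
  "qform M (\<lambda>j. c0 * u j + c1 * v j) w = cnj c0 * qform M u w + cnj c1 * qform M v w"
  unfolding qform_def by (simp add: algebra_simps sum.distrib sum_distrib_left)

lemma qform_lincomb_right:
  "qform M u (\<lambda>j. c0 * v j + c1 * w j) = c0 * qform M u v + c1 * qform M u w"
  unfolding qform_def by (simp add: algebra_simps sum.distrib sum_distrib_left)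

lemma qform_unit_vec: "qform M (unit_vec x) (unit_vec y) = M x y"
proof -
  have "cnj (unit_vec x i) * M i j * unit_vec y j = (if j = y then if i = x then M i j else 0 else 0)" for i j
    by (simp add: unit_vec_def)
  then show ?thesis
    unfolding qform_def by simp
qed

lemma qform_bproj: "qform (bproj a) u w = cnj (cinner (bket a) u) * cinner (bket a) w"
  unfolding qform_def cinner_def bproj_def
  by (simp only: cnj_sum complex_cnj_mult complex_cnj_cnj sum_product) (simp add: mult_ac)

lemma complex_slope_zero_if_affine_nonneg:
  assumes "\<And>r. 0 \<le> complex_of_real r * z + c"
  shows "z = 0"
proof -
  have h: "r * Re z + Re c \<ge> 0 \<and> r * Im z + Im c = 0" for r
    using assms[of r] by (simp add: less_eq_complex_def)
  have "Im z = 0" using h[of 0] h[of 1] by simp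
  moreover have "Re z = 0"
  proof (rule ccontr)
    assume nz: "Re z \<noteq> 0"
    have "(-(\<bar>Re c\<bar> + 1) / Re z) * Re z + Re c \<ge> 0" using h by blast
    with nz show False by simp
  qed
  ultimately show ?thesis by (simp add: complex_eq_iff)
qed

text \<open>Expand \<open>\<langle>t u + w, M (t u + w)\<rangle> \<ge> 0\<close> for real and imaginary \<open>t\<close>.\<close>
lemma qform_isotropic_imp_kernel:
  assumes pos: "\<And>v. 0 \<le> qform M v v" and iso: "qform M u u = 0"
  shows "qform M w u = 0" and "qform M u w = 0"
proof -
  have key: "0 \<le> cnj t * qform M u w + t * qform M w u + qform M w w" for t
  proof -
    have "0 \<le> qform M (\<lambda>j. t * u j + 1 * w j) (\<lambda>j. t * u j + 1 * w j)"
      by (rule pos)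
    then show ?thesis
      by (simp only: qform_lincomb_left qform_lincomb_right) (simp add: iso algebra_simps)
  qed
  have "qform M u w + qform M w u = 0"
    by (rule complex_slope_zero_if_affine_nonneg[where c = "qform M w w"])
       (use key[of "complex_of_real r" for r] in \<open>simp add: algebra_simps\<close>)
  moreover have "\<i> * (qform M w u - qform M u w) = 0"
    by (rule complex_slope_zero_if_affine_nonneg[where c = "qform M w w"])
       (use key[of "\<i> * complex_of_real r" for r] in \<open>simp add: algebra_simps\<close>)
  ultimately show "qform M w u = 0" and "qform M u w = 0"
    by (simp_all add: algebra_simps)
qed

definition tensor_vec :: "(idx \<Rightarrow> complex) \<Rightarrow> (idx \<Rightarrow> complex) \<Rightarrow> (idx \<Rightarrow> complex) \<Rightarrow> idx \<times> idx \<times> idx \<Rightarrow> complex" where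
  "tensor_vec x y z = (\<lambda>(i, j, k). x i * y j * z k)"

lemma sum_UNIV_triple:
  "(\<Sum>I\<in>(UNIV :: ('a::finite \<times> 'b::finite \<times> 'c::finite) set). f I) = (\<Sum>i\<in>UNIV. \<Sum>j\<in>UNIV. \<Sum>k\<in>UNIV. f (i, j, k))"
  by (simp add: UNIV_Times_UNIV[symmetric] sum.cartesian_product del: UNIV_Times_UNIV)

lemma sum_product_triple:
  "sum f A * sum g B * sum h C = (\<Sum>i\<in>A. \<Sum>j\<in>B. \<Sum>k\<in>C. f i * g j * (h k :: 'a::comm_semiring_0))"
proof -
  have "sum f A * sum g B * sum h C = (\<Sum>i\<in>A. f i * (sum g B * sum h C))"
    by (simp add: sum_distrib_right mult.assoc)
  also have "\<dots> = (\<Sum>i\<in>A. \<Sum>j\<in>B. f i * (g j * sum h C))"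
    by (simp add: sum_distrib_left[symmetric] sum_distrib_right[symmetric])
  also have "\<dots> = (\<Sum>i\<in>A. \<Sum>j\<in>B. \<Sum>k\<in>C. f i * g j * h k)"
    by (simp add: sum_distrib_left[symmetric] mult.assoc)
  finally show ?thesis .
qed

lemma qform_tensor3:
  "qform (tensor3 A B C) (tensor_vec x y z) (tensor_vec x' y' z') = qform A x x' * qform B y y' * qform C z z'"
proof -
  have "qform A x x' * qform B y y' * qform C z z' =
    (\<Sum>i\<in>UNIV. \<Sum>j\<in>UNIV. \<Sum>k\<in>UNIV. \<Sum>i'\<in>UNIV. \<Sum>j'\<in>UNIV. \<Sum>k'\<in>UNIV.
      (cnj (x i) * A i i' * x' i') * (cnj (y j) * B j j' * y' j') * (cnj (z k) * C k k' * z' k'))"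
    unfolding qform_def sum_product_triple by (simp only: sum_product_triple)
  also have "\<dots> = qform (tensor3 A B C) (tensor_vec x y z) (tensor_vec x' y' z')"
    unfolding qform_def sum_UNIV_triple
    by (intro sum.cong refl) (simp add: tensor3_def tensor_vec_def sum_distrib_left mult_ac)
  finally show ?thesis ..
qed

lemma qform_sum_tensor3:
  "qform (\<lambda>X Y. \<Sum>i\<in>I. tensor3 (A i) (B i) (C i) X Y) (tensor_vec x y z) (tensor_vec x y z)
     = (\<Sum>i\<in>I. qform (A i) x x * qform (B i) y y * qform (C i) z z)"
  by (simp only: qform_sum_op qform_tensor3)

subsection \<open>An orthonormal basis adapted to the vectors \<open>|\<^bold>a\<rangle>\<close>\<close>

definition qfac_perp :: "nat \<Rightarrow> bool \<Rightarrow> complex" where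
  "qfac_perp x q = (if x = 0 then (if q then 1 else 0)
              else if x = 1 then (if q then 0 else 1)
              else if x = 2 then (if q then -1 else 1) / complex_of_real (sqrt 2)
              else 1 / complex_of_real (sqrt 2))"

definition basis_vec :: "nat \<Rightarrow> bool \<Rightarrow> idx \<Rightarrow> complex" where
  "basis_vec r s = (\<lambda>(q, p). (if s then qfac_perp r q else qfac r q) * (if p = rfac r then 1 else 0))"

lemma sum_UNIV_idx:
  "(\<Sum>i\<in>(UNIV :: idx set). f i) =
    f (False, False, False) + f (False, False, True) + f (False, True, False) + f (False, True, True) +
    f (True, False, False) + f (True, False, True) + f (True, True, False) + f (True, True, True)"
proof -
  have U: "(UNIV :: idx set) = {(False, False, False), (False, False, True), (False, True, False),
      (False, True, True), (True, False, False), (True, False, True), (True, True, False), (True, True, True)}"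
    by auto
  show ?thesis by (subst U) (simp add: add.assoc)
qed

lemma sqrt2_mult_sqrt2: "complex_of_real (sqrt 2) * complex_of_real (sqrt 2) = 2"
  by (simp flip: of_real_mult)

lemma le_3_cases: "r \<le> (3::nat) \<Longrightarrow> r = 0 \<or> r = 1 \<or> r = 2 \<or> r = 3"
  by auto

lemma bket_eq_basis_vec: "bket a = basis_vec a False"
  unfolding bket_def basis_vec_def by simp

lemma cinner_basis_vec:
  assumes "r \<le> 3" "r' \<le> 3"
  shows "cinner (basis_vec r s) (basis_vec r' s') = (if (r, s) = (r', s') then 1 else 0)"
  using le_3_cases[OF assms(1)] le_3_cases[OF assms(2)]
  by (elim disjE; cases s; cases s')
     (simp_all add: cinner_def basis_vec_def sum_UNIV_idx qfac_def qfac_perp_def rfac_def sqrt2_mult_sqrt2)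

lemma rfac_surj: "\<exists>r\<le>3. rfac r = p"
proof (cases p)
  case (Pair b c)
  have "2 * of_bool b + of_bool c \<le> (3::nat) \<and> rfac (2 * of_bool b + of_bool c) = (b, c)"
    by (cases b; cases c) (simp_all add: rfac_def)
  with Pair show ?thesis by blast
qed

lemma unit_vec_in_basis_span:
  "\<exists>r\<le>3. \<exists>c0 c1. unit_vec x = (\<lambda>j. c0 * basis_vec r False j + c1 * basis_vec r True j)"
proof -
  obtain q p where x: "x = (q, p)" by (cases x)
  obtain r where r: "r \<le> 3" "rfac r = p"
    using rfac_surj by blast
  have "unit_vec x = (\<lambda>j. qfac r q * basis_vec r False j + qfac_perp r q * basis_vec r True j)"
  proof
    fix j :: idx
    obtain d e f where j: "j = (d, e, f)" by (cases j)
    show "unit_vec x j = qfac r q * basis_vec r False j + qfac_perp r q * basis_vec r True j"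
      using le_3_cases[OF r(1)] unfolding x j r(2)[symmetric]
      by (elim disjE; cases q; cases d; cases e; cases f)
         (simp_all add: unit_vec_def basis_vec_def qfac_def qfac_perp_def rfac_def sqrt2_mult_sqrt2 field_simps)
  qed
  with r show ?thesis by blast
qed
lemma op_eq_zero_if_qform_basis_zero:
  assumes "\<And>r s r' s'. r \<le> 3 \<Longrightarrow> r' \<le> 3 \<Longrightarrow> qform N (basis_vec r s) (basis_vec r' s') = 0"
  shows "N = (\<lambda>_ _. 0)"
proof (intro ext)
  fix x y
  obtain r c0 c1 where r: "r \<le> 3" and x: "unit_vec x = (\<lambda>j. c0 * basis_vec r False j + c1 * basis_vec r True j)"
    using unit_vec_in_basis_span by blast
  obtain r' c0' c1' where r': "r' \<le> 3" and y: "unit_vec y = (\<lambda>j. c0' * basis_vec r' False j + c1' * basis_vec r' True j)"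
    using unit_vec_in_basis_span by blast
  have "N x y = qform N (unit_vec x) (unit_vec y)"
    by (simp add: qform_unit_vec)
  also have "\<dots> = 0"
    unfolding x y qform_lincomb_left qform_lincomb_right by (simp add: assms r r')
  finally show "N x y = 0" .
qed

definition diag_support :: "op \<Rightarrow> (nat \<times> bool) set" where
  "diag_support M = {(r, s). r \<le> 3 \<and> qform M (basis_vec r s) (basis_vec r s) \<noteq> 0}"

lemma qform_basis_vec_eq_zero_off_support:
  assumes "psd M" "r \<le> 3" "(r, s) \<notin> diag_support M"
  shows "qform M w (basis_vec r s) = 0" and "qform M (basis_vec r s) w = 0"
  using assms qform_isotropic_imp_kernel[of M "basis_vec r s" w]
  by (auto simp: diag_support_def psd_iff_qform)

lemma diag_support_nonempty:
  assumes "psd M" "M \<noteq> (\<lambda>_ _. 0)"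
  shows "diag_support M \<noteq> {}"
  using assms op_eq_zero_if_qform_basis_zero[of M] qform_basis_vec_eq_zero_off_support(1)[OF assms(1)]
  by blast

lemma qform_bproj_basis_vec:
  assumes "a \<le> 3" "r \<le> 3" "r' \<le> 3"
  shows "qform (bproj a) (basis_vec r s) (basis_vec r' s') =
    (if (r, s) = (a, False) \<and> (r', s') = (a, False) then 1 else 0)"
  using assms by (simp add: qform_bproj bket_eq_basis_vec cinner_basis_vec)

lemma psd_eq_scaled_bproj:
  assumes psd: "psd M" and nz: "M \<noteq> (\<lambda>_ _. 0)" and a: "a \<le> 3"
    and supp: "diag_support M \<subseteq> {(a, False)}"
  shows "\<exists>\<alpha>::real. \<alpha> > 0 \<and> M = (\<lambda>x y. complex_of_real \<alpha> * bproj a x y)"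
proof -
  define c where "c = qform M (bket a) (bket a)"
  have "qform M (basis_vec r s) (basis_vec r' s') = c * qform (bproj a) (basis_vec r s) (basis_vec r' s')"
    if "r \<le> 3" "r' \<le> 3" for r s r' s'
  proof (cases "(r, s) = (a, False) \<and> (r', s') = (a, False)")
    case True
    then show ?thesis by (simp add: c_def qform_bproj_basis_vec bket_eq_basis_vec a)
  next
    case False
    then have "qform M (basis_vec r s) (basis_vec r' s') = 0"
      using supp qform_basis_vec_eq_zero_off_support[OF psd] that by blast
    with False show ?thesis
      by (simp only: qform_bproj_basis_vec a that if_False mult_zero_right)
  qed
  then have "(\<lambda>x y. M x y - c * bproj a x y) = (\<lambda>_ _. 0)"
    by (intro op_eq_zero_if_qform_basis_zero) (simp add: qform_diff_op qform_scale_op)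
  then have M: "M = (\<lambda>x y. c * bproj a x y)"
    by (simp add: fun_eq_iff)
  have "0 \<le> c"
    using psd by (simp add: psd_iff_qform c_def)
  moreover have "c \<noteq> 0"
    using nz M by auto
  ultimately have "Re c > 0" "c = complex_of_real (Re c)"
    by (auto simp: less_eq_complex_def complex_eq_iff)
  with M show ?thesis by metis
qed

lemma finite_Tset: "finite Tset"
  by (simp add: Tset_def)

lemma Tset_bounded: "(a, b, c) \<in> Tset \<Longrightarrow> a \<le> 3 \<and> b \<le> 3 \<and> c \<le> 3"
  unfolding Tset_def by auto

lemma Gamma_eq_sum_tensor3:
  "Gamma = (\<lambda>X Y. 1/2 * (\<Sum>t\<in>Tset. tensor3 (bproj (fst t)) (bproj (fst (snd t))) (bproj (snd (snd t))) X Y))"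
  unfolding Gamma_def by (simp add: case_prod_beta)

lemma qform_Gamma_basis_vec:
  assumes "r1 \<le> 3" "r2 \<le> 3" "r3 \<le> 3"
  shows "qform Gamma (tensor_vec (basis_vec r1 s1) (basis_vec r2 s2) (basis_vec r3 s3))
                     (tensor_vec (basis_vec r1 s1) (basis_vec r2 s2) (basis_vec r3 s3))
       = (if \<not> s1 \<and> \<not> s2 \<and> \<not> s3 \<and> (r1, r2, r3) \<in> Tset then 1/2 else 0)"
proof -
  have "qform (bproj (fst t)) (basis_vec r1 s1) (basis_vec r1 s1) *
        qform (bproj (fst (snd t))) (basis_vec r2 s2) (basis_vec r2 s2) *
        qform (bproj (snd (snd t))) (basis_vec r3 s3) (basis_vec r3 s3)
      = (if t = (r1, r2, r3) \<and> \<not> s1 \<and> \<not> s2 \<and> \<not> s3 then 1 else 0)" if "t \<in> Tset" for t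
    using that Tset_bounded[of "fst t" "fst (snd t)" "snd (snd t)"]
    by (auto simp: qform_bproj_basis_vec assms prod_eq_iff)
  then have "qform Gamma (tensor_vec (basis_vec r1 s1) (basis_vec r2 s2) (basis_vec r3 s3))
                         (tensor_vec (basis_vec r1 s1) (basis_vec r2 s2) (basis_vec r3 s3))
      = 1/2 * (\<Sum>t\<in>Tset. if t = (r1, r2, r3) \<and> \<not> s1 \<and> \<not> s2 \<and> \<not> s3 then 1 else 0)"
    by (simp only: Gamma_eq_sum_tensor3 qform_scale_op qform_sum_tensor3 cong: sum.cong)
  then show ?thesis
    by (cases s1; cases s2; cases s3) (auto simp: finite_Tset)
qed

lemma diag_support_triples_in_Tset:
  assumes "finite I" and "i \<in> I"
    and psd: "\<And>j. j \<in> I \<Longrightarrow> psd (A j) \<and> psd (B j) \<and> psd (C j)"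
    and Gamma: "Gamma = (\<lambda>X Y. \<Sum>j\<in>I. tensor3 (A j) (B j) (C j) X Y)"
    and supp: "(r1, s1) \<in> diag_support (A i)" "(r2, s2) \<in> diag_support (B i)" "(r3, s3) \<in> diag_support (C i)"
  shows "\<not> s1 \<and> \<not> s2 \<and> \<not> s3 \<and> (r1, r2, r3) \<in> Tset"
proof (rule ccontr)
  define f where "f = (\<lambda>j. qform (A j) (basis_vec r1 s1) (basis_vec r1 s1) *
    qform (B j) (basis_vec r2 s2) (basis_vec r2 s2) * qform (C j) (basis_vec r3 s3) (basis_vec r3 s3))"
  assume "\<not> ?thesis"
  then have "qform Gamma (tensor_vec (basis_vec r1 s1) (basis_vec r2 s2) (basis_vec r3 s3))
                         (tensor_vec (basis_vec r1 s1) (basis_vec r2 s2) (basis_vec r3 s3)) = 0"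
    using supp by (simp add: qform_Gamma_basis_vec diag_support_def)
  then have "sum f I = 0"
    by (simp only: Gamma qform_sum_tensor3 f_def)
  moreover have "\<forall>j\<in>I. 0 \<le> f j"
    using psd by (simp add: f_def psd_iff_qform)
  ultimately have "f i = 0"
    using sum_nonneg_eq_0_iff[OF \<open>finite I\<close>] \<open>i \<in> I\<close> by blast
  with supp show False
    by (simp add: f_def diag_support_def)
qed

subsection \<open>The Latin-cube property of \<open>T\<close>\<close>

definition latin_triples :: "('a \<times> 'b \<times> 'c) set \<Rightarrow> bool" where
  "latin_triples T \<longleftrightarrow>
     (\<forall>a a' b c. (a, b, c) \<in> T \<longrightarrow> (a', b, c) \<in> T \<longrightarrow> a = a') \<and>
     (\<forall>a b b' c. (a, b, c) \<in> T \<longrightarrow> (a, b', c) \<in> T \<longrightarrow> b = b') \<and>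
     (\<forall>a b c c'. (a, b, c) \<in> T \<longrightarrow> (a, b, c') \<in> T \<longrightarrow> c = c')"

lemma latin_triples_Tset: "latin_triples Tset"
  unfolding latin_triples_def Tset_def by auto

lemma latin_box_eq_singletons:
  assumes latin: "latin_triples T" and "S1 \<noteq> {}" "S2 \<noteq> {}" "S3 \<noteq> {}"
    and box: "\<And>a s b t c u. (a, s) \<in> S1 \<Longrightarrow> (b, t) \<in> S2 \<Longrightarrow> (c, u) \<in> S3 \<Longrightarrow>
                \<not> s \<and> \<not> t \<and> \<not> u \<and> (a, b, c) \<in> T"
  shows "\<exists>(a, b, c)\<in>T. S1 = {(a, False)} \<and> S2 = {(b, False)} \<and> S3 = {(c, False)}"
proof -
  obtain a s b t c u where in_S: "(a, s) \<in> S1" "(b, t) \<in> S2" "(c, u) \<in> S3"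
    using assms(2-4) by auto
  then have abc: "(a, b, c) \<in> T" and "\<not> s" "\<not> t" "\<not> u"
    using box by blast+
  have "p = (a, False)" if "p \<in> S1" for p
    using box[of "fst p" "snd p" b t c u] that in_S abc latin
    unfolding latin_triples_def by (metis prod.collapse)
  moreover have "p = (b, False)" if "p \<in> S2" for p
    using box[of a s "fst p" "snd p" c u] that in_S abc latin
    unfolding latin_triples_def by (metis prod.collapse)
  moreover have "p = (c, False)" if "p \<in> S3" for p
    using box[of a s b t "fst p" "snd p"] that in_S abc latin
    unfolding latin_triples_def by (metis prod.collapse)
  ultimately have "S1 = {(a, False)}" "S2 = {(b, False)}" "S3 = {(c, False)}"
    using in_S by blast+
  with abc show ?thesis by blast
qed

theorem lemma3:
  fixes I :: "'k set" and A B C :: "'k \<Rightarrow> op"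
  assumes "finite I"
    and "\<And>i. i \<in> I \<Longrightarrow> psd (A i) \<and> A i \<noteq> (\<lambda>_ _. 0)"
    and "\<And>i. i \<in> I \<Longrightarrow> psd (B i) \<and> B i \<noteq> (\<lambda>_ _. 0)"
    and "\<And>i. i \<in> I \<Longrightarrow> psd (C i) \<and> C i \<noteq> (\<lambda>_ _. 0)"
    and "Gamma = (\<lambda>X Y. \<Sum>i\<in>I. tensor3 (A i) (B i) (C i) X Y)"
  shows "\<forall>i\<in>I. \<exists>\<alpha> \<beta> \<gamma> :: real. \<alpha> > 0 \<and> \<beta> > 0 \<and> \<gamma> > 0 \<and>
           (\<exists>(a, b, c)\<in>Tset.
              A i = (\<lambda>x y. complex_of_real \<alpha> * bproj a x y) \<and>
              B i = (\<lambda>x y. complex_of_real \<beta> * bproj b x y) \<and>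
              C i = (\<lambda>x y. complex_of_real \<gamma> * bproj c x y))"
proof
  fix i assume i: "i \<in> I"
  have psd: "psd (A j) \<and> psd (B j) \<and> psd (C j)" if "j \<in> I" for j
    using assms(2-4)[OF that] by blast
  have nonempty: "diag_support (A i) \<noteq> {}" "diag_support (B i) \<noteq> {}" "diag_support (C i) \<noteq> {}"
    using assms(2-4)[OF i] diag_support_nonempty by blast+
  obtain a b c where abc: "(a, b, c) \<in> Tset" and supp: "diag_support (A i) = {(a, False)}"
      "diag_support (B i) = {(b, False)}" "diag_support (C i) = {(c, False)}"
    using latin_box_eq_singletons[OF latin_triples_Tset nonempty
        diag_support_triples_in_Tset[OF assms(1) i psd assms(5)]] by blast
  have "a \<le> 3" "b \<le> 3" "c \<le> 3"
    using Tset_bounded[OF abc] by auto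
  then obtain \<alpha> \<beta> \<gamma> :: real where "\<alpha> > 0" "A i = (\<lambda>x y. complex_of_real \<alpha> * bproj a x y)"
      "\<beta> > 0" "B i = (\<lambda>x y. complex_of_real \<beta> * bproj b x y)"
      "\<gamma> > 0" "C i = (\<lambda>x y. complex_of_real \<gamma> * bproj c x y)"
    using psd_eq_scaled_bproj[of "A i" a] psd_eq_scaled_bproj[of "B i" b] psd_eq_scaled_bproj[of "C i" c]
      assms(2-4)[OF i] supp by blast
  with abc show "\<exists>\<alpha> \<beta> \<gamma> :: real. \<alpha> > 0 \<and> \<beta> > 0 \<and> \<gamma> > 0 \<and>
           (\<exists>(a, b, c)\<in>Tset.
              A i = (\<lambda>x y. complex_of_real \<alpha> * bproj a x y) \<and>
              B i = (\<lambda>x y. complex_of_real \<beta> * bproj b x y) \<and>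
              C i = (\<lambda>x y. complex_of_real \<gamma> * bproj c x y))"
    by blast
qed

end
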